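(* Let $\mathbb H=\mathbb{R}\times\mathbb{R}_{>0}$ and define $L:\mathbb H\to\mathbb{R}_{>0}$ by $L(a,b)=\frac32b+a$ if $\frac ab\ge-1$ and $L(a,b)=-\frac{b^2}{2a}$ if $\frac ab\le-1$. Then for all $v_1,v_2\in\mathbb H$, $L(v_1+v_2)\le L(v_1)+L(v_2)$, and $L(kv)=kL(v)$ for all $v\in\mathbb H$ and $k>0$. *)

theory Defs
  imports Complex_Main "HOL-Analysis.Product_Vector"
begin

definition H :: "(real \<times> real) set" where
  "H = {(a, b). b > 0}"

definition L :: "real \<times> real \<Rightarrow> real" where
  "L v = (let a = fst v; b = snd v in
          if a / b \<ge> -1 then 3/2 * b + a else - (b^2) / (2 * a))"

end

theory Submission
  imports Defs
begin

text \<open>On \<open>H\<close>, \<open>L\<close> is the pointwise maximum of the linear functionals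
  \<open>(a, b) \<mapsto> a + 3/2 b\<close> and \<open>(a, b) \<mapsto> c\<^sup>2 a / 2 - c b\<close> for \<open>-1 \<le> c < 0\<close>, and the maximum is
  attained (on the branch \<open>a/b \<le> -1\<close> at \<open>c = b/a\<close>). A maximum of additive functions is
  subadditive. Homogeneity is immediate since \<open>a/b\<close> is invariant under scaling.\<close>

lemma subadditive_if_attained_max_of_additive:
  fixes f :: "'a::plus \<Rightarrow> 'b::ordered_ab_semigroup_add"
  assumes lower: "\<And>l w. l \<in> F \<Longrightarrow> w \<in> S \<Longrightarrow> l w \<le> f w"
    and attained: "\<And>w. w \<in> S \<Longrightarrow> \<exists>l\<in>F. f w = l w"
    and additive: "\<And>l. l \<in> F \<Longrightarrow> l (u + v) = l u + l v"
    and "u \<in> S" "v \<in> S" "u + v \<in> S"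
  shows "f (u + v) \<le> f u + f v"
proof -
  obtain l where "l \<in> F" and max: "f (u + v) = l (u + v)"
    using attained \<open>u + v \<in> S\<close> by blast
  note max
  also have "\<dots> = l u + l v"
    using additive \<open>l \<in> F\<close> .
  also have "\<dots> \<le> f u + f v"
    using lower \<open>l \<in> F\<close> \<open>u \<in> S\<close> \<open>v \<in> S\<close> by (intro add_mono) auto
  finally show ?thesis .
qed

lemma L_pair: "L (a, b) = (if a / b \<ge> -1 then 3/2 * b + a else - (b^2) / (2 * a))"
  by (simp add: L_def)

lemma H_add_closed: "u \<in> H \<Longrightarrow> v \<in> H \<Longrightarrow> u + v \<in> H"
  by (auto simp: H_def)

lemma L_ge_linear:
  assumes "b > 0"
  shows "a + 3/2 * b \<le> L (a, b)"
proof (cases "a / b \<ge> -1")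
  case True
  then show ?thesis by (simp add: L_pair)
next
  case False
  then have a: "a < -b" using assms by (auto simp: le_divide_eq)
  then have "(2*a + b) * (a + b) \<ge> 0" using assms by (intro mult_nonpos_nonpos) auto
  then have "a + 3/2 * b \<le> - (b^2) / (2 * a)" using a assms
    by (simp add: field_simps power2_eq_square)
  then show ?thesis using False by (simp add: L_pair)
qed

lemma L_ge_tangent:
  assumes "b > 0" "-1 \<le> c" "c < 0"
  shows "c^2 * a / 2 - c * b \<le> L (a, b)"
proof (cases "a / b \<ge> -1")
  case True
  then have a: "a \<ge> -b" using assms by (simp add: le_divide_eq)
  have "c^2 \<le> 1"
    using assms by (simp add: abs_square_le_1)
  then have "-b * (1 - c^2/2) \<le> a * (1 - c^2/2)" using a by (intro mult_right_mono) auto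
  moreover have "b * (1 + c)^2 / 2 \<ge> 0" using assms by simp
  ultimately have "c^2 * a / 2 - c * b \<le> 3/2 * b + a"
    by (simp add: algebra_simps power2_eq_square)
  then show ?thesis using True by (simp add: L_pair)
next
  case False
  then have a: "a < -b" using assms by (auto simp: le_divide_eq)
  then have pos: "-2 * a > 0" using assms by simp
  have "(c^2 * a / 2 - c * b) * (-2 * a) = b^2 - (b - a * c)^2"
    by (simp add: algebra_simps power2_eq_square)
  also have "\<dots> \<le> b^2" by simp
  also have "\<dots> = (- (b^2) / (2 * a)) * (-2 * a)" using pos by (simp add: field_simps)
  finally have "c^2 * a / 2 - c * b \<le> - (b^2) / (2 * a)"
    using pos by (simp only: mult_le_cancel_right_pos)
  then show ?thesis using False by (simp add: L_pair)
qed

lemma L_eq_tangent: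
  assumes "b > 0" "\<not> a / b \<ge> -1"
  shows "-1 \<le> b / a" "b / a < 0" "L (a, b) = (b / a)^2 * a / 2 - (b / a) * b"
proof -
  have a: "a < -b" using assms by (auto simp: le_divide_eq)
  then show "-1 \<le> b / a" "b / a < 0" using assms by (auto simp: le_divide_eq divide_less_0_iff)
  show "L (a, b) = (b / a)^2 * a / 2 - (b / a) * b"
    using a assms by (simp add: L_pair field_simps power2_eq_square)
qed

definition L_minorants :: "(real \<times> real \<Rightarrow> real) set" where
  "L_minorants = insert (\<lambda>(a, b). a + 3/2 * b) ((\<lambda>c (a, b). c^2 * a / 2 - c * b) ` {-1..<0})"

lemma L_minorants_additive: "l \<in> L_minorants \<Longrightarrow> l (u + v) = l u + l v"
  by (cases u; cases v) (auto simp: L_minorants_def algebra_simps)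

lemma L_minorants_le:
  assumes "l \<in> L_minorants" "w \<in> H"
  shows "l w \<le> L w"
proof -
  obtain a b where w: "w = (a, b)" "b > 0" using assms(2) by (cases w) (auto simp: H_def)
  show ?thesis
    using assms(1) L_ge_linear[OF w(2)] L_ge_tangent[OF w(2)] unfolding L_minorants_def w(1)
    by auto
qed

lemma L_minorants_attained:
  assumes "w \<in> H"
  shows "\<exists>l\<in>L_minorants. L w = l w"
proof -
  obtain a b where w: "w = (a, b)" "b > 0" using assms by (cases w) (auto simp: H_def)
  show ?thesis
  proof (cases "a / b \<ge> -1")
    case True
    then show ?thesis using w by (auto simp: L_minorants_def L_pair)
  next
    case False
    let ?tangent = "\<lambda>c (a, b). c^2 * a / 2 - c * b"
    have "?tangent (b / a) \<in> L_minorants"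
      using L_eq_tangent(1,2)[OF w(2) False] unfolding L_minorants_def by (intro insertI2 imageI) simp
    moreover have "L w = ?tangent (b / a) w"
      using w L_eq_tangent(3)[OF w(2) False] by simp
    ultimately show ?thesis by blast
  qed
qed

lemma L_homogeneous:
  assumes "v \<in> H" "k > 0"
  shows "L (k *\<^sub>R v) = k * L v"
proof -
  obtain a b where v: "v = (a, b)" "b > 0" using assms by (cases v) (auto simp: H_def)
  have "(k * a) / (k * b) = a / b" using \<open>k > 0\<close> by simp
  then show ?thesis using v \<open>k > 0\<close>
    by (simp add: L_pair power2_eq_square field_simps)
qed

theorem lemma5p3:
  shows "(\<forall>v1\<in>H. \<forall>v2\<in>H. L (v1 + v2) \<le> L v1 + L v2)
         \<and> (\<forall>v\<in>H. \<forall>k::real. k > 0 \<longrightarrow> L (k *\<^sub>R v) = k * L v)"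
proof (intro conjI ballI allI impI)
  fix v1 v2 assume "v1 \<in> H" "v2 \<in> H"
  then show "L (v1 + v2) \<le> L v1 + L v2"
    by (intro subadditive_if_attained_max_of_additive[where F = L_minorants and S = H]
        L_minorants_le L_minorants_attained L_minorants_additive H_add_closed)
next
  fix v :: "real \<times> real" and k :: real
  assume "v \<in> H" "k > 0"
  then show "L (k *\<^sub>R v) = k * L v" by (rule L_homogeneous)
qed

end
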